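(* Let $\beta\in\mathbb{C}$ and $k\in\mathbb{Z}$ with $\beta\neq k$, and define $f:\mathbb{Z}\times\mathbb{Z}\to\mathbb{C}$ by $f(m,n)=n+k$ if $m+n+k\neq0$ and $f(-n-k,n)=\frac{(n+k)(\beta-n-k)}{\beta-k}$ (the structure constants of the left-symmetric algebra $V^{\beta,k}$ on the Witt algebra with basis $\{x_n\}$, $x_mx_n=f(m,n)x_{m+n}$). Then there is no function $\omega:\mathbb{Z}\times\mathbb{Z}\to\mathbb{C}$ satisfying, for all $m,n,l\in\mathbb{Z}$, $$\omega(m,n)-\omega(n,m)=\tfrac{1}{12}(n^3-n)\delta_{m+n,0},\qquad (n-m)\omega(m+n,l)=\omega(m,n+l)f(n,l)-\omega(n,m+l)f(m,l).$$
   Context: These conditions on $\omega$ are exactly the conditions for the product $\theta\theta=x_m\theta=\theta x_m=0$, $x_mx_n=f(m,n)x_{m+n}+\omega(m,n)\theta$ on $V^{\beta,k}\oplus\mathbb{C}\theta$ to be a left-symmetric algebra (i.e. $(xy)z-x(yz)=(yx)z-y(xz)$) whose commutator is the Virasoro bracket $[x_m,x_n]=(n-m)x_{m+n}+\delta_{m+n,0}\frac{n^3-n}{12}\theta$, $[\theta,x_n]=0$. *)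

theory Defs
  imports Complex_Main
begin

definition Vf :: "complex \<Rightarrow> int \<Rightarrow> int \<Rightarrow> int \<Rightarrow> complex" where
  "Vf \<beta> k m n =
     (if m + n + k \<noteq> 0 then of_int (n + k)
      else of_int (n + k) * (\<beta> - of_int (n + k)) / (\<beta> - of_int k))"

end

theory Submission
  imports Defs
begin

text \<open>Only the values d a = \<omega> a (-a) on the anti-diagonal are needed. Taking l = -(m+n) in the
  compatibility condition gives the linear recursion
  (n - m) d(m+n) = (k - m - n) (d m - d n) for m, n \<noteq> k, while skew-symmetry prescribes
  d a - d (-a) = (a - a^3)/12. The pairs (a, -a) force 24 d 0 = k (a^2 - 1) for two different
  values of a^2, hence k = 0; for k = 0 the recursion expresses d 2 and d (-2) both as 4 d 1,
  contradicting d 2 - d (-2) = -1/2.\<close>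

lemma Vf_generic: "m + n + k \<noteq> 0 \<Longrightarrow> Vf \<beta> k m n = of_int (n + k)"
  by (simp add: Vf_def)

locale Vf_cocycle =
  fixes \<beta> :: complex and k :: int and \<omega> :: "int \<Rightarrow> int \<Rightarrow> complex"
  assumes skew: "\<omega> m n - \<omega> n m = (if m + n = 0 then (of_int n ^ 3 - of_int n) / 12 else 0)"
    and compat: "of_int (n - m) * \<omega> (m + n) l = \<omega> m (n + l) * Vf \<beta> k n l - \<omega> n (m + l) * Vf \<beta> k m l"
begin

abbreviation diag :: "int \<Rightarrow> complex" where
  "diag a \<equiv> \<omega> a (- a)"

lemma diag_recursion:
  assumes "m \<noteq> k" "n \<noteq> k"
  shows "of_int (n - m) * diag (m + n) = of_int (k - m - n) * (diag m - diag n)"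
proof -
  have "of_int (n - m) * \<omega> (m + n) (- m - n) =
          \<omega> m (n + (- m - n)) * Vf \<beta> k n (- m - n) - \<omega> n (m + (- m - n)) * Vf \<beta> k m (- m - n)"
    by (rule compat)
  moreover have "Vf \<beta> k n (- m - n) = of_int (k - m - n)" "Vf \<beta> k m (- m - n) = of_int (k - m - n)"
    using assms by (simp_all add: Vf_generic)
  ultimately show ?thesis
    by (simp add: algebra_simps)
qed

lemma diag_skew: "diag a - diag (- a) = (of_int a - of_int a ^ 3) / 12"
  using skew[of a "- a"] by simp

lemma diag_0_eq:
  assumes "a \<noteq> 0" "a \<noteq> k" "a \<noteq> - k"
  shows "24 * diag 0 = of_int k * (of_int a ^ 2 - 1)"
proof -
  have "- 2 * of_int a * diag 0 = of_int k * (diag a - diag (- a))"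
    using diag_recursion[of a "- a"] assms by simp
  also have "\<dots> = of_int k * ((of_int a - of_int a ^ 3) / 12)"
    using diag_skew[of a] by simp
  finally have "of_int a * (24 * diag 0) = of_int a * (of_int k * (of_int a ^ 2 - 1))"
    by (simp add: field_simps power3_eq_cube power2_eq_square)
  with assms(1) show ?thesis
    by simp
qed

lemma k_eq_0: "k = 0"
proof -
  obtain a b :: int where ab: "0 < a" "a < b" "b \<le> 3" "a \<noteq> \<bar>k\<bar>" "b \<noteq> \<bar>k\<bar>"
  proof (cases "\<bar>k\<bar> = 1 \<or> \<bar>k\<bar> = 2")
    case True
    then show thesis
      using that[of "3 - \<bar>k\<bar>" 3] by auto
  next
    case False
    then show thesis
      using that[of 1 2] by auto
  qed
  then have "of_int k * (of_int a ^ 2 - 1) = (of_int k * (of_int b ^ 2 - 1) :: complex)"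
    using diag_0_eq[of a] diag_0_eq[of b] by (auto split: abs_split)
  then have "k = 0 \<or> of_int (a ^ 2) = (of_int (b ^ 2) :: complex)"
    by auto
  moreover have "a ^ 2 < b ^ 2"
    using ab by (simp add: power_strict_mono)
  ultimately show ?thesis
    by (metis of_int_eq_iff less_irrefl)
qed

lemma inconsistent: False
proof -
  note rec = diag_recursion[unfolded k_eq_0, simplified]
  have d3: "diag 3 = 3 * diag 2 - 3 * diag 1"
    using rec[of 1 2, simplified] by (simp add: algebra_simps)
  have d4: "diag 4 = 6 * diag 2 - 8 * diag 1"
    using rec[of 1 3, simplified] d3 by algebra
  have d5: "diag 5 = 10 * diag 2 - 15 * diag 1"
    using rec[of 1 4, simplified] d4 by algebra
  have "\<omega> (- 1) 1 = diag 1"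
    using diag_skew[of 1] by simp
  then have "6 * diag 4 = 4 * diag 5 - 4 * diag 1"
    using rec[of "- 1" 5, simplified] by simp
  then have d2: "diag 2 = 4 * diag 1"
    using d4 d5 by algebra
  have "7 * diag 3 = 3 * diag 5 - 3 * \<omega> (- 2) 2"
    using rec[of "- 2" 5, simplified] by simp
  then have "\<omega> (- 2) 2 = 4 * diag 1"
    using d2 d3 d5 by algebra
  with d2 show False
    using diag_skew[of 2] by simp
qed

end

theorem theorem4p2:
  fixes \<beta> :: complex and k :: int
  assumes "\<beta> \<noteq> of_int k"
  shows "\<not> (\<exists>\<omega> :: int \<Rightarrow> int \<Rightarrow> complex.
            (\<forall>m n. \<omega> m n - \<omega> n m =
                    (if m + n = 0 then (of_int n ^ 3 - of_int n) / 12 else 0)) \<and>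
            (\<forall>m n l. of_int (n - m) * \<omega> (m + n) l =
                    \<omega> m (n + l) * Vf \<beta> k n l - \<omega> n (m + l) * Vf \<beta> k m l))"
  using Vf_cocycle.inconsistent unfolding Vf_cocycle_def by blast

end
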